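(* Let $p$ be a prime and $r,s$ integers with $1\le s\le p-1$. Every proper $(r,s)$-GAP in $\mathbb{F}_p^n$ can be written as a union of independent $(k,s)$-GAPs in $\mathbb{F}_p^n$ for some integer $k\ge r\log s/\log p$.
   Context: For $a_1,\dots,a_r,b\in\mathbb{F}_p^n$, the $(r,s)$-GAP $G_{a_1,\dots,a_r,b}$ is $\{\sum_{i=1}^r a_it_i+b: t_i\in\mathbb{Z},\ 0\le t_i\le s-1\}$; it is proper if all $s^r$ sums are distinct, and independent if $a_1,\dots,a_r$ are linearly independent over $\mathbb{F}_p$. *)

theory Defs
  imports "HOL-Analysis.Cartesian_Space" "Berlekamp_Zassenhaus.Finite_Field"
begin

text \<open>F_p^n is modelled as the type ('p mod_ring)^'n, where 'p :: prime_card has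
  prime cardinality p = CARD('p) and 'n is a finite index type with n = CARD('n).\<close>

definition GAP :: "nat \<Rightarrow> nat \<Rightarrow> (nat \<Rightarrow> 'a::field ^ 'n) \<Rightarrow> 'a ^ 'n \<Rightarrow> ('a ^ 'n) set" where
  "GAP r s a b = {(\<Sum>i<r. of_nat (t i) *s a i) + b | t. \<forall>i<r. t i < s}"

definition proper_GAP :: "nat \<Rightarrow> nat \<Rightarrow> (nat \<Rightarrow> 'a::field ^ 'n) \<Rightarrow> 'a ^ 'n \<Rightarrow> bool" where
  "proper_GAP r s a b \<longleftrightarrow>
     inj_on (\<lambda>t. (\<Sum>i<r. of_nat (t i) *s a i) + b) ({..<r} \<rightarrow>\<^sub>E {..<s})"

definition independent_GAP :: "nat \<Rightarrow> (nat \<Rightarrow> 'a::field ^ 'n) \<Rightarrow> bool" where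
  "independent_GAP r a \<longleftrightarrow> inj_on a {..<r} \<and> vec.independent (a ` {..<r})"

end

theory Submission
  imports Defs
begin

text \<open>Choose among a_1,...,a_r a maximal linearly independent subfamily a_j, j \<in> J, with
  d = |J| members. Fixing the coefficients of the generators outside J cuts the GAP into
  translates of the independent (d,s)-GAP on the generators in J. For the bound on d, the
  s^r distinct points of the proper GAP lie in a translate of the span of the subfamily,
  which has p^d elements, so s^r \<le> p^d.\<close>

lemma (in Modules.module) card_span_le:
  assumes "finite (UNIV :: 'a set)" and "finite B"
  shows "card (span B) \<le> CARD('a) ^ card B"
proof -
  have "span B = (\<lambda>u. \<Sum>v\<in>B. scale (u v) v) ` (B \<rightarrow>\<^sub>E UNIV)"
  proof -
    have "(\<Sum>v\<in>B. scale (u v) v) = (\<Sum>v\<in>B. scale (restrict u B v) v)" for u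
      by simp
    then show ?thesis
      unfolding span_finite[OF \<open>finite B\<close>] by (auto intro: image_eqI[where x = "restrict _ B"])
  qed
  then have "card (span B) \<le> card (B \<rightarrow>\<^sub>E (UNIV :: 'a set))"
    by (simp add: card_image_le assms finite_PiE)
  also have "\<dots> = CARD('a) ^ card B"
    using \<open>finite B\<close> by (simp add: card_PiE)
  finally show ?thesis .
qed

lemma ln_ratio_le_of_pow_le:
  fixes s p r d :: nat
  assumes "1 \<le> s" and "2 \<le> p" and "s ^ r \<le> p ^ d"
  shows "real r * ln (real s) / ln (real p) \<le> real d"
proof -
  have "real s ^ r \<le> real p ^ d"
    using assms(3) by (metis of_nat_le_iff of_nat_power)
  then have "ln (real s ^ r) \<le> ln (real p ^ d)"
    using assms(1,2) by (subst ln_le_cancel_iff) auto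
  then have "real r * ln (real s) \<le> real d * ln (real p)"
    using assms(1,2) by (simp add: ln_realpow)
  moreover have "ln (real p) > 0"
    using assms(2) by simp
  ultimately show ?thesis
    by (simp add: divide_le_eq)
qed

lemma GAP_eq_image:
  "GAP r s a b = (\<lambda>t. (\<Sum>i<r. of_nat (t i) *s a i) + b) ` ({..<r} \<rightarrow>\<^sub>E {..<s})"
proof (intro equalityI subsetI)
  fix x assume "x \<in> GAP r s a b"
  then obtain t where t: "\<forall>i<r. t i < s" and x: "x = (\<Sum>i<r. of_nat (t i) *s a i) + b"
    unfolding GAP_def by blast
  have "x = (\<Sum>i<r. of_nat (restrict t {..<r} i) *s a i) + b"
    using x by simp
  moreover have "restrict t {..<r} \<in> {..<r} \<rightarrow>\<^sub>E {..<s}"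
    using t by auto
  ultimately show "x \<in> (\<lambda>t. (\<Sum>i<r. of_nat (t i) *s a i) + b) ` ({..<r} \<rightarrow>\<^sub>E {..<s})"
    by blast
qed (auto simp: GAP_def PiE_def Pi_def)

lemma card_GAP_proper:
  assumes "proper_GAP r s a b"
  shows "card (GAP r s a b) = s ^ r"
  using assms unfolding GAP_eq_image proper_GAP_def
  by (simp add: card_image card_PiE)

lemma GAP_subset_translate_span:
  assumes "a ` {..<r} \<subseteq> vec.span S"
  shows "GAP r s a b \<subseteq> (\<lambda>x. x + b) ` vec.span S"
proof
  fix x assume "x \<in> GAP r s a b"
  then obtain t where x: "x = (\<Sum>i<r. of_nat (t i) *s a i) + b"
    unfolding GAP_def by blast
  have "(\<Sum>i<r. of_nat (t i) *s a i) \<in> vec.span S"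
    using assms by (intro vec.span_sum vec.span_scale) auto
  then show "x \<in> (\<lambda>x. x + b) ` vec.span S"
    using x by blast
qed

lemma obtain_independent_spanning_subfamily:
  fixes a :: "nat \<Rightarrow> 'a::field ^ 'n"
  obtains d f where "inj_on f {..<d}" and "f ` {..<d} \<subseteq> {..<r}"
    and "independent_GAP d (a \<circ> f)" and "a ` {..<r} \<subseteq> vec.span ((a \<circ> f) ` {..<d})"
proof -
  obtain B where BA: "B \<subseteq> a ` {..<r}" and B_indep: "vec.independent B"
    and A_span: "a ` {..<r} \<subseteq> vec.span B"
    using vec.maximal_independent_subset by blast
  define J where "J = inv_into {..<r} a ` B"
  have a_inv: "a (inv_into {..<r} a v) = v" if "v \<in> B" for v
    using that BA by (meson f_inv_into_f subsetD)
  have inv_in: "inv_into {..<r} a v \<in> {..<r}" if "v \<in> B" for v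
    using that BA by (meson inv_into_into subsetD)
  have J_sub: "J \<subseteq> {..<r}" and aJ: "a ` J = B" and inj_J: "inj_on a J"
    unfolding J_def inj_on_def using a_inv inv_in by (auto simp: image_iff)
  have "finite J"
    using J_sub finite_subset by blast
  then obtain f where f: "bij_betw f {..<card J} J"
    using ex_bij_betw_nat_finite lessThan_atLeast0 by metis
  have img: "(a \<circ> f) ` {..<card J} = B"
    using f aJ by (metis bij_betw_def image_comp)
  show thesis
  proof
    show "inj_on f {..<card J}" and "f ` {..<card J} \<subseteq> {..<r}"
      using f J_sub by (auto simp: bij_betw_def)
    show "independent_GAP (card J) (a \<circ> f)"
      unfolding independent_GAP_def
      using f inj_J img B_indep by (auto simp: bij_betw_def intro: comp_inj_on)
    show "a ` {..<r} \<subseteq> vec.span ((a \<circ> f) ` {..<card J})"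
      using A_span img by simp
  qed
qed

lemma GAP_eq_Union_GAP_subfamily:
  assumes f: "inj_on f {..<d}" "f ` {..<d} \<subseteq> {..<r}"
  shows "GAP r s a b =
    \<Union>((\<lambda>t. GAP d s (a \<circ> f) (b + (\<Sum>i\<in>{..<r} - f ` {..<d}. of_nat (t i) *s a i)))
        ` {t. \<forall>i<r. t i < s})"
    (is "_ = \<Union>(?G ` _)")
proof -
  let ?J = "f ` {..<d}"
  have sum_split: "(\<Sum>i<r. h i) = (\<Sum>j<d. h (f j)) + (\<Sum>i\<in>{..<r} - ?J. h i)"
    for h :: "nat \<Rightarrow> 'c::comm_monoid_add"
    using sum.subset_diff[OF f(2), of h] sum.reindex[OF f(1), of h] by (simp add: add.commute)
  show ?thesis
  proof (intro equalityI subsetI)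
    fix x assume "x \<in> GAP r s a b"
    then obtain t where t: "\<forall>i<r. t i < s" and x: "x = (\<Sum>i<r. of_nat (t i) *s a i) + b"
      unfolding GAP_def by blast
    have "x = (\<Sum>j<d. of_nat (t (f j)) *s (a \<circ> f) j)
              + (b + (\<Sum>i\<in>{..<r} - ?J. of_nat (t i) *s a i))"
      using x sum_split[of "\<lambda>i. of_nat (t i) *s a i"] by (simp add: algebra_simps)
    moreover have "\<forall>j<d. t (f j) < s"
      using t f(2) by auto
    ultimately have "x \<in> ?G t"
      unfolding GAP_def mem_Collect_eq by (auto intro!: exI[of _ "\<lambda>j. t (f j)"])
    then show "x \<in> \<Union>(?G ` {t. \<forall>i<r. t i < s})"
      using t by blast
  next
    fix x assume "x \<in> \<Union>(?G ` {t. \<forall>i<r. t i < s})"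
    then obtain t u where t: "\<forall>i<r. t i < s" and u: "\<forall>j<d. u j < s"
      and x: "x = (\<Sum>j<d. of_nat (u j) *s (a \<circ> f) j)
                  + (b + (\<Sum>i\<in>{..<r} - ?J. of_nat (t i) *s a i))"
      unfolding GAP_def by blast
    define t' where "t' i = (if i \<in> ?J then u (the_inv_into {..<d} f i) else t i)" for i
    have t'_f: "t' (f j) = u j" if "j < d" for j
      using that f(1) by (simp add: t'_def the_inv_into_f_f)
    have "\<forall>i<r. t' i < s"
      using t u f(1) by (auto simp: t'_def the_inv_into_f_f)
    moreover have "x = (\<Sum>i<r. of_nat (t' i) *s a i) + b"
      using x t'_f sum_split[of "\<lambda>i. of_nat (t' i) *s a i"] by (simp add: t'_def algebra_simps)
    ultimately show "x \<in> GAP r s a b"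
      unfolding GAP_def mem_Collect_eq by (auto intro!: exI[of _ t'])
  qed
qed

theorem claim5p7:
  fixes r s :: nat
    and a :: "nat \<Rightarrow> ('p::prime_card mod_ring) ^ 'n"
    and b :: "('p mod_ring) ^ 'n"
  assumes "1 \<le> s" and "s \<le> CARD('p) - 1"
    and "proper_GAP r s a b"
  shows "\<exists>k::nat. real k \<ge> real r * ln (real s) / ln (real CARD('p)) \<and>
           (\<exists>\<G>. (\<forall>H\<in>\<G>. \<exists>a' b'. independent_GAP k a' \<and> H = GAP k s a' b') \<and>
                 \<Union>\<G> = GAP r s a b)"
proof -
  obtain d f where f: "inj_on f {..<d}" "f ` {..<d} \<subseteq> {..<r}"
    and indep: "independent_GAP d (a \<circ> f)"
    and span: "a ` {..<r} \<subseteq> vec.span ((a \<circ> f) ` {..<d})"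
    by (rule obtain_independent_spanning_subfamily)
  let ?S = "vec.span ((a \<circ> f) ` {..<d})"
  have card_subfamily: "card ((a \<circ> f) ` {..<d}) = d"
    using indep card_image unfolding independent_GAP_def by fastforce
  have "s ^ r = card (GAP r s a b)"
    using assms(3) by (rule card_GAP_proper[symmetric])
  also have "\<dots> \<le> card ((\<lambda>x. x + b) ` ?S)"
    by (rule card_mono[OF finite GAP_subset_translate_span[OF span]])
  also have "\<dots> \<le> card ?S"
    by (rule card_image_le[OF finite])
  also have "\<dots> \<le> CARD('p) ^ d"
    using vec.card_span_le[OF finite_class.finite_UNIV finite, of "(a \<circ> f) ` {..<d}"]
    by (simp only: card_subfamily CARD_mod_ring)
  finally have "s ^ r \<le> CARD('p) ^ d" .
  then have bound: "real r * ln (real s) / ln (real CARD('p)) \<le> real d"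
    by (rule ln_ratio_le_of_pow_le[OF assms(1) prime_ge_2_nat[OF prime_card]])
  define \<G> where "\<G> = (\<lambda>t. GAP d s (a \<circ> f) (b + (\<Sum>i\<in>{..<r} - f ` {..<d}. of_nat (t i) *s a i)))
                     ` {t. \<forall>i<r. t i < s}"
  have "\<Union>\<G> = GAP r s a b"
    unfolding \<G>_def by (rule GAP_eq_Union_GAP_subfamily[OF f, symmetric])
  moreover have "\<forall>H\<in>\<G>. \<exists>a' b'. independent_GAP d a' \<and> H = GAP d s a' b'"
    unfolding \<G>_def using indep by blast
  ultimately show ?thesis
    using bound by blast
qed

end
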